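(* Let $n\ge 2$, let $A\in\mathbb{R}^{n\times n}$ be symmetric positive definite, $B=A^{1/2}$, $E=\{x: x^{\top}A^{-1}x=1\}$, and for $x_0$ with $x_0^{\top}A^{-1}x_0=1$ set $y_0=B^{-1}x_0$. There exists a parallelepiped $P$ inscribed in $E$ having $x_0$ as a vertex with $L(P)=2^n\sqrt{\operatorname{tr}(A)}$ in each of the following cases: (a) $n=2$ and $x_0$ arbitrary on $E$; (b) $n\ge2$, $A$ is a scalar multiple of the identity, and $x_0$ arbitrary on $E$; (c) $n\ge 3$ and $y_0$ is an eigenvector of $A$.
   Context: A (centred, $n$-dimensional) parallelepiped with linearly independent edge vectors $v_1,\dots,v_n$ is $P=\{\sum_i t_iv_i:|t_i|\le\tfrac12\}$ with vertices $\tfrac12\sum_i\varepsilon_iv_i$, $\varepsilon\in\{\pm1\}^n$; it is inscribed in $E$ if all vertices satisfy $x^{\top}A^{-1}x=1$. $L(P)=2^{n-1}\sum_i\|v_i\|$ is the total edge length. *)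

theory Defs
  imports "HOL-Analysis.Analysis"
begin

definition spd :: "real^'n^'n \<Rightarrow> bool" where
  "spd A \<longleftrightarrow> transpose A = A \<and> (\<forall>x. x \<noteq> 0 \<longrightarrow> x \<bullet> (A *v x) > 0)"

definition ellipsoid :: "real^'n^'n \<Rightarrow> (real^'n) set" where
  "ellipsoid A = {x. x \<bullet> (matrix_inv A *v x) = 1}"

definition signs :: "('n::finite \<Rightarrow> real) set" where
  "signs = {e. \<forall>i. e i \<in> {-1, 1}}"

text \<open>Vertex (1/2) sum_i e_i v_i of the centred parallelepiped with edge vectors v.\<close>
definition pp_vertex :: "('n::finite \<Rightarrow> real^'m) \<Rightarrow> ('n \<Rightarrow> real) \<Rightarrow> real^'m" where
  "pp_vertex v e = (1/2) *\<^sub>R (\<Sum>i\<in>UNIV. e i *\<^sub>R v i)"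

definition pp_edges :: "('n::finite \<Rightarrow> real^'n) \<Rightarrow> bool" where
  "pp_edges v \<longleftrightarrow> inj v \<and> independent (range v)"

definition pp_inscribed :: "real^'n^'n \<Rightarrow> ('n \<Rightarrow> real^'n) \<Rightarrow> bool" where
  "pp_inscribed A v \<longleftrightarrow> (\<forall>e\<in>signs. pp_vertex v e \<in> ellipsoid A)"

definition pp_length :: "('n::finite \<Rightarrow> real^'n) \<Rightarrow> real" where
  "pp_length v = 2 ^ (CARD('n) - 1) * (\<Sum>i\<in>UNIV. norm (v i))"

end

theory Submission
  imports Defs
begin

text \<open>
  Write \<open>x0 = B y\<close> with \<open>norm y = 1\<close>. Since \<open>B\<close> maps the unit sphere onto \<open>E\<close>, it suffices
  to inscribe in the unit sphere a parallelepiped \<open>Q\<close> with vertex \<open>y\<close> and to take \<open>P = B Q\<close>.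
  For an orthonormal basis \<open>u\<close>, let \<open>Q\<close> have the edges \<open>2 (y \<bullet> u i) u i\<close>: its vertices
  \<open>\<Sum>i. \<plusminus>(y \<bullet> u i) u i\<close> are unit vectors, one of them is \<open>y\<close>, and the edges of \<open>P\<close>
  have lengths \<open>2 \<bar>y \<bullet> u i\<bar> sqrt (u i \<bullet> A u i)\<close>. Hence \<open>L(P) = 2^n sqrt (tr A)\<close> as soon as
  \<open>u i \<bullet> A u i = tr A (y \<bullet> u i)\<^sup>2\<close> for all \<open>i\<close>, i.e. as soon as the quadratic form
  \<open>tr A (y \<bullet> x)\<^sup>2 - x \<bullet> A x\<close>, whose trace is zero, has zero diagonal in the basis \<open>u\<close>.
  Every trace-zero quadratic form has such a basis: if some diagonal entry is nonzero, there
  are entries of both signs, and a rotation in the plane of the two corresponding basis vectors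
  produces a vector with zero diagonal entry, leaving a trace-zero form on its orthogonal
  complement.
\<close>

lemma invertible_matrix_inv:
  fixes A :: "'a::field^'n^'n"
  assumes "invertible A"
  shows "A ** matrix_inv A = mat 1" "matrix_inv A ** A = mat 1"
proof -
  have "\<exists>A'. A ** A' = mat 1 \<and> A' ** A = mat 1"
    using assms unfolding invertible_def .
  then have "A ** matrix_inv A = mat 1 \<and> matrix_inv A ** A = mat 1"
    unfolding matrix_inv_def by (rule someI_ex)
  then show "A ** matrix_inv A = mat 1" "matrix_inv A ** A = mat 1" by auto
qed

lemma matrix_inv_eq_right_inverse:
  fixes A A' :: "'a::field^'n^'n"
  assumes "A ** A' = mat 1"
  shows "matrix_inv A = A'"
proof -
  have "invertible A"
    using assms invertible_right_inverse by blast
  then show ?thesis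
    by (metis assms invertible_matrix_inv(2) matrix_mul_assoc matrix_mul_lid matrix_mul_rid)
qed

lemma symmetric_matrix_self_adjoint:
  fixes A :: "real^'n^'n"
  assumes "transpose A = A"
  shows "(A *v x) \<bullet> y = x \<bullet> (A *v y)"
proof -
  have "(A *v x) \<bullet> y = (x v* transpose A) \<bullet> y"
    by (simp only: vector_transpose_matrix)
  also have "\<dots> = x \<bullet> (transpose A *v y)"
    by (rule dot_lmul_matrix)
  finally show ?thesis
    using assms by simp
qed

lemma spd_self_adjoint: "spd A \<Longrightarrow> (A *v x) \<bullet> y = x \<bullet> (A *v y)"
  unfolding spd_def using symmetric_matrix_self_adjoint by blast

lemma spd_invertible:
  assumes "spd A"
  shows "invertible A"
proof -
  have "inj ((*v) A)"
  proof (rule injI)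
    fix x y
    assume "A *v x = A *v y"
    then have "(x - y) \<bullet> (A *v (x - y)) = 0"
      by (simp add: matrix_vector_mult_diff_distrib)
    then show "x = y"
      using assms unfolding spd_def by (metis less_irrefl right_minus_eq)
  qed
  then show ?thesis
    using matrix_left_invertible_injective invertible_left_inverse by blast
qed

lemma spd_sqrt_quadratic_form:
  assumes "spd B" "B ** B = A"
  shows "x \<bullet> (A *v x) = (norm (B *v x))\<^sup>2"
proof -
  have "x \<bullet> (A *v x) = x \<bullet> (B *v (B *v x))"
    by (simp add: assms(2)[symmetric] matrix_vector_mul_assoc)
  also have "\<dots> = (B *v x) \<bullet> (B *v x)"
    by (simp only: spd_self_adjoint[OF assms(1)])
  finally show ?thesis
    by (simp add: power2_norm_eq_inner)
qed

lemma spd_sqrt_image_in_ellipsoid_iff: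
  assumes "spd B" "B ** B = A"
  shows "B *v z \<in> ellipsoid A \<longleftrightarrow> norm z = 1"
proof -
  have B_inv: "B ** matrix_inv B = mat 1" "matrix_inv B ** B = mat 1"
    using invertible_matrix_inv spd_invertible assms(1) by blast+
  have "matrix_inv A = matrix_inv B ** matrix_inv B"
    by (rule matrix_inv_eq_right_inverse)
      (metis assms(2) B_inv(1) matrix_mul_assoc matrix_mul_rid)
  then have "matrix_inv A *v (B *v z) = matrix_inv B *v z"
    by (metis B_inv(2) matrix_mul_assoc matrix_mul_rid matrix_vector_mul_assoc)
  then have "(B *v z) \<bullet> (matrix_inv A *v (B *v z)) = z \<bullet> z"
    by (simp only: spd_self_adjoint[OF assms(1)] matrix_vector_mul_assoc B_inv(1)
        matrix_vector_mul_lid)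
  then show ?thesis
    by (simp add: ellipsoid_def norm_eq_1)
qed

definition orthonormal :: "'a::real_inner set \<Rightarrow> bool" where
  "orthonormal S \<longleftrightarrow> pairwise orthogonal S \<and> (\<forall>x\<in>S. norm x = 1)"

lemma self_adjoint_quadratic_combination:
  fixes f :: "'a::real_inner \<Rightarrow> 'a"
  assumes "linear f" and "\<And>x y. f x \<bullet> y = x \<bullet> f y"
  shows "(a *\<^sub>R x + b *\<^sub>R y) \<bullet> f (a *\<^sub>R x + b *\<^sub>R y)
    = a\<^sup>2 * (x \<bullet> f x) + 2 * a * b * (x \<bullet> f y) + b\<^sup>2 * (y \<bullet> f y)"
proof -
  have "y \<bullet> f x = x \<bullet> f y"
    by (metis assms(2) inner_commute)
  then show ?thesis
    by (simp add: linear_add[OF assms(1)] linear_scale[OF assms(1)] inner_add_left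
        inner_add_right power2_eq_square algebra_simps)
qed

lemma self_adjoint_plane_rotation:
  fixes f :: "'a::real_inner \<Rightarrow> 'a"
  assumes f: "linear f" "\<And>x y. f x \<bullet> y = x \<bullet> f y"
    and b: "b1 \<bullet> b1 = 1" "b2 \<bullet> b2 = 1" "b1 \<bullet> b2 = 0"
    and sign: "b1 \<bullet> f b1 > 0" "b2 \<bullet> f b2 < 0"
  obtains w w' where "w \<bullet> w = 1" "w' \<bullet> w' = 1" "w \<bullet> w' = 0"
    "w \<in> span {b1, b2}" "w' \<in> span {b1, b2}"
    "w \<bullet> f w = 0" "w' \<bullet> f w' = b1 \<bullet> f b1 + b2 \<bullet> f b2"
proof -
  define r where "r \<theta> = cos \<theta> *\<^sub>R b1 + sin \<theta> *\<^sub>R b2" for \<theta>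
  define r' where "r' \<theta> = (- sin \<theta>) *\<^sub>R b1 + cos \<theta> *\<^sub>R b2" for \<theta>
  let ?c = "b1 \<bullet> f b2"
  have q_r: "r \<theta> \<bullet> f (r \<theta>)
      = (cos \<theta>)\<^sup>2 * (b1 \<bullet> f b1) + 2 * cos \<theta> * sin \<theta> * ?c + (sin \<theta>)\<^sup>2 * (b2 \<bullet> f b2)" for \<theta>
    unfolding r_def by (rule self_adjoint_quadratic_combination[OF f])
  have q_r': "r' \<theta> \<bullet> f (r' \<theta>)
      = (sin \<theta>)\<^sup>2 * (b1 \<bullet> f b1) - 2 * cos \<theta> * sin \<theta> * ?c + (cos \<theta>)\<^sup>2 * (b2 \<bullet> f b2)" for \<theta>
    unfolding r'_def self_adjoint_quadratic_combination[OF f] by simp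
  have "continuous_on {0..pi/2} (\<lambda>\<theta>. r \<theta> \<bullet> f (r \<theta>))"
    unfolding q_r by (intro continuous_intros)
  then obtain \<theta> where \<theta>: "r \<theta> \<bullet> f (r \<theta>) = 0"
    using IVT2'[of "\<lambda>\<theta>. r \<theta> \<bullet> f (r \<theta>)" "pi/2" 0 0] sign by (auto simp: q_r)
  show ?thesis
  proof (rule that[of "r \<theta>" "r' \<theta>"])
    have "b2 \<bullet> b1 = 0"
      using b(3) by (simp add: inner_commute)
    then show "r \<theta> \<bullet> r \<theta> = 1" "r' \<theta> \<bullet> r' \<theta> = 1" "r \<theta> \<bullet> r' \<theta> = 0"
      using b by (simp_all add: r_def r'_def inner_add_left inner_add_right algebra_simps)
    show "r \<theta> \<in> span {b1, b2}" "r' \<theta> \<in> span {b1, b2}"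
      by (simp_all add: r_def r'_def span_add span_diff span_scale span_base)
    show "r \<theta> \<bullet> f (r \<theta>) = 0"
      by (rule \<theta>)
    have "r \<theta> \<bullet> f (r \<theta>) + r' \<theta> \<bullet> f (r' \<theta>)
        = ((sin \<theta>)\<^sup>2 + (cos \<theta>)\<^sup>2) * (b1 \<bullet> f b1 + b2 \<bullet> f b2)"
      unfolding q_r q_r' by (simp only: algebra_simps)
    then have "r \<theta> \<bullet> f (r \<theta>) + r' \<theta> \<bullet> f (r' \<theta>) = b1 \<bullet> f b1 + b2 \<bullet> f b2"
      by simp
    then show "r' \<theta> \<bullet> f (r' \<theta>) = b1 \<bullet> f b1 + b2 \<bullet> f b2"
      using \<theta> by simp
  qed
qed

lemma sum_eq_0_obtains_pos_neg:
  fixes g :: "'a \<Rightarrow> real"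
  assumes "finite S" "sum g S = 0" "\<exists>x\<in>S. g x \<noteq> 0"
  obtains a b where "a \<in> S" "b \<in> S" "g a > 0" "g b < 0"
proof -
  have exists_neg: "\<exists>b\<in>S. h b < 0" if "sum h S = 0" "\<exists>x\<in>S. h x \<noteq> 0" for h :: "'a \<Rightarrow> real"
  proof (rule ccontr)
    assume "\<not> (\<exists>b\<in>S. h b < 0)"
    then have "\<forall>x\<in>S. h x = 0"
      using sum_nonneg_eq_0_iff[OF assms(1), of h] that(1) by (simp add: not_less)
    with that(2) show False
      by blast
  qed
  have "\<exists>a\<in>S. - g a < 0"
    by (rule exists_neg) (use assms(2,3) in \<open>simp_all add: sum_negf\<close>)
  moreover have "\<exists>b\<in>S. g b < 0"
    by (rule exists_neg) (use assms(2,3) in simp_all)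
  ultimately show ?thesis
    using that by force
qed

lemma orthonormal_zero_diagonal_step:
  fixes f :: "'a::real_inner \<Rightarrow> 'a"
  assumes f: "linear f" "\<And>x y. f x \<bullet> y = x \<bullet> f y"
    and S: "finite S" "orthonormal S" "(\<Sum>x\<in>S. x \<bullet> f x) = 0" "\<exists>x\<in>S. x \<bullet> f x \<noteq> 0"
  obtains S' w where "finite S'" "card S = Suc (card S')" "orthonormal S'" "(\<Sum>x\<in>S'. x \<bullet> f x) = 0"
    "S' \<subseteq> span S" "norm w = 1" "w \<in> span S" "w \<bullet> f w = 0" "\<forall>y\<in>span S'. orthogonal w y"
proof -
  obtain b1 b2 where b: "b1 \<in> S" "b2 \<in> S" "b1 \<bullet> f b1 > 0" "b2 \<bullet> f b2 < 0"
    using sum_eq_0_obtains_pos_neg[OF S(1,3,4)] by blast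
  then have "b1 \<noteq> b2"
    by auto
  with S(2) b have "b1 \<bullet> b1 = 1" "b2 \<bullet> b2 = 1" "b1 \<bullet> b2 = 0"
    by (auto simp: orthonormal_def pairwise_def orthogonal_def norm_eq_1)
  then obtain w w' where w: "w \<bullet> w = 1" "w' \<bullet> w' = 1" "w \<bullet> w' = 0"
      "w \<in> span {b1, b2}" "w' \<in> span {b1, b2}"
      "w \<bullet> f w = 0" "w' \<bullet> f w' = b1 \<bullet> f b1 + b2 \<bullet> f b2"
    using self_adjoint_plane_rotation[OF f _ _ _ b(3,4)] by blast
  define R where "R = S - {b1, b2}"
  have S_eq: "S = insert b1 (insert b2 R)"
    using b(1,2) by (auto simp: R_def)
  have "finite R"
    using S(1) by (simp add: R_def)
  have perp_R: "orthogonal x y" if "x \<in> R" "y \<in> span {b1, b2}" for x y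
    using orthogonal_to_span[OF that(2)] S(2) that(1) b(1,2)
    by (auto simp: R_def orthonormal_def pairwise_def)
  then have "w' \<notin> R"
    using w(2,5) by (auto simp: orthogonal_def)
  have span_b_S: "span {b1, b2} \<subseteq> span S"
    using b(1,2) by (simp add: span_mono)
  show ?thesis
  proof (rule that[of "insert w' R" w])
    show "finite (insert w' R)"
      using \<open>finite R\<close> by simp
    show "card S = Suc (card (insert w' R))"
      using \<open>finite R\<close> \<open>w' \<notin> R\<close> \<open>b1 \<noteq> b2\<close> by (subst S_eq) (simp add: R_def)
    show "orthonormal (insert w' R)"
      using S(2) perp_R w(2,5)
      by (auto simp: R_def orthonormal_def pairwise_insert norm_eq_1 orthogonal_commute
          intro: pairwise_subset)
    have "(\<Sum>x\<in>S. x \<bullet> f x) = b1 \<bullet> f b1 + b2 \<bullet> f b2 + (\<Sum>x\<in>R. x \<bullet> f x)"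
      using \<open>finite R\<close> \<open>b1 \<noteq> b2\<close> by (subst S_eq) (simp add: R_def)
    then show "(\<Sum>x\<in>insert w' R. x \<bullet> f x) = 0"
      using S(3) w(7) \<open>w' \<notin> R\<close> \<open>finite R\<close> by simp
    show "insert w' R \<subseteq> span S" "w \<in> span S"
      using span_b_S w(4,5) by (auto simp: R_def span_base)
    show "norm w = 1" "w \<bullet> f w = 0"
      using w(1,6) by (simp_all add: norm_eq_1)
    have "orthogonal w z" if "z \<in> insert w' R" for z
      using that perp_R[of z w] w(3,4) by (auto simp: orthogonal_def inner_commute)
    then show "\<forall>y\<in>span (insert w' R). orthogonal w y"
      using orthogonal_to_span by blast
  qed
qed

lemma orthonormal_zero_diagonal_exists:
  fixes f :: "'a::real_inner \<Rightarrow> 'a"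
  assumes f: "linear f" "\<And>x y. f x \<bullet> y = x \<bullet> f y"
  shows "finite S \<Longrightarrow> orthonormal S \<Longrightarrow> (\<Sum>x\<in>S. x \<bullet> f x) = 0 \<Longrightarrow>
    \<exists>T. finite T \<and> card T = card S \<and> orthonormal T \<and> T \<subseteq> span S \<and> (\<forall>x\<in>T. x \<bullet> f x = 0)"
proof (induction "card S" arbitrary: S rule: less_induct)
  case (less S)
  show ?case
  proof (cases "\<forall>x\<in>S. x \<bullet> f x = 0")
    case True
    with less.prems show ?thesis
      by (intro exI[of _ S]) (auto simp: span_superset)
  next
    case False
    then have "\<exists>x\<in>S. x \<bullet> f x \<noteq> 0"
      by blast
    then obtain S' w where S': "finite S'" "card S = Suc (card S')" "orthonormal S'"
        "(\<Sum>x\<in>S'. x \<bullet> f x) = 0" "S' \<subseteq> span S"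
      and w: "norm w = 1" "w \<in> span S" "w \<bullet> f w = 0" "\<forall>y\<in>span S'. orthogonal w y"
      by (rule orthonormal_zero_diagonal_step[OF f less.prems])
    have "card S' < card S"
      using S'(2) by simp
    then obtain T' where T': "finite T'" "card T' = card S'" "orthonormal T'"
        "T' \<subseteq> span S'" "\<forall>x\<in>T'. x \<bullet> f x = 0"
      using less.hyps[OF _ S'(1,3,4)] by blast
    have w_perp: "orthogonal w y" if "y \<in> T'" for y
      using w(4) T'(4) that by blast
    then have "w \<notin> T'"
      using w(1) by (auto simp: orthogonal_def norm_eq_1)
    show ?thesis
    proof (intro exI[of _ "insert w T'"] conjI)
      show "finite (insert w T')" "card (insert w T') = card S"
        using T'(1,2) S'(2) \<open>w \<notin> T'\<close> by simp_all
      show "orthonormal (insert w T')"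
        using T'(3) w_perp w(1) by (auto simp: orthonormal_def pairwise_insert orthogonal_commute)
      show "insert w T' \<subseteq> span S"
        using T'(4) S'(5) w(2) span_minimal[OF _ subspace_span] by blast
      show "\<forall>x\<in>insert w T'. x \<bullet> f x = 0"
        using T'(5) w(3) by simp
    qed
  qed
qed

definition orthonormal_frame :: "('n \<Rightarrow> 'a::real_inner) \<Rightarrow> bool" where
  "orthonormal_frame u \<longleftrightarrow> (\<forall>i j. u i \<bullet> u j = (if i = j then 1 else 0))"

lemma orthonormal_frame_inj: "orthonormal_frame u \<Longrightarrow> inj u"
  unfolding orthonormal_frame_def by (metis injI zero_neq_one)

lemma orthonormal_frame_zero_diagonal:
  fixes f :: "real^'n \<Rightarrow> real^'n"
  assumes f: "linear f" "\<And>x y. f x \<bullet> y = x \<bullet> f y"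
    and trace_zero: "(\<Sum>i\<in>UNIV. axis i 1 \<bullet> f (axis i 1)) = 0"
  obtains u :: "'n \<Rightarrow> real^'n" where "orthonormal_frame u" "\<And>i. u i \<bullet> f (u i) = 0"
proof -
  define S where "S = range (\<lambda>i::'n. axis i (1::real))"
  have inj_axis: "inj (\<lambda>i::'n. axis i (1::real))"
    by (rule injI) (metis axis_eq_axis zero_neq_one)
  have "orthonormal S"
    by (auto simp: S_def orthonormal_def pairwise_def orthogonal_def inner_axis_axis)
  moreover have "(\<Sum>x\<in>S. x \<bullet> f x) = 0"
    using trace_zero inj_axis by (simp add: S_def sum.reindex)
  ultimately obtain T where T: "finite T" "card T = CARD('n)" "orthonormal T" "\<forall>x\<in>T. x \<bullet> f x = 0"
    using orthonormal_zero_diagonal_exists[OF f, of S] inj_axis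
    by (auto simp: S_def card_image)
  then obtain u where u: "bij_betw u (UNIV::'n set) T"
    using bij_betw_iff_card[of "UNIV::'n set" T] by auto
  show ?thesis
  proof
    show "orthonormal_frame u"
      using u T(3) unfolding orthonormal_frame_def orthonormal_def
      by (auto simp: bij_betw_def pairwise_def orthogonal_def norm_eq_1 inj_eq)
    show "u i \<bullet> f (u i) = 0" for i
      using u T(4) by (auto simp: bij_betw_def)
  qed
qed

lemma norm_sum_orthonormal_frame:
  assumes "orthonormal_frame u" "finite I"
  shows "(norm (\<Sum>i\<in>I. c i *\<^sub>R u i))\<^sup>2 = (\<Sum>i\<in>I. (c i)\<^sup>2)"
proof -
  have frame: "u i \<bullet> u j = (if i = j then 1 else 0)" for i j
    using assms(1) by (simp add: orthonormal_frame_def)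
  have "(\<Sum>i\<in>I. c i *\<^sub>R u i) \<bullet> (\<Sum>i\<in>I. c i *\<^sub>R u i) = (\<Sum>i\<in>I. (c i)\<^sup>2)"
    using assms(2) by (simp add: frame inner_sum_left inner_sum_right if_distrib power2_eq_square
        cong: if_cong)
  then show ?thesis
    by (simp only: power2_norm_eq_inner)
qed

lemma orthonormal_frame_expansion:
  fixes u :: "'n \<Rightarrow> real^'n"
  assumes "orthonormal_frame u"
  shows "(\<Sum>i\<in>UNIV. (y \<bullet> u i) *\<^sub>R u i) = y"
proof -
  have inj: "inj u"
    using assms by (rule orthonormal_frame_inj)
  have orth: "pairwise orthogonal (range u)" and unit: "\<And>x. x \<in> range u \<Longrightarrow> norm x = 1"
    using assms inj by (auto simp: orthonormal_frame_def pairwise_def orthogonal_def norm_eq_1 inj_eq)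
  have "independent (range u)"
    using orth unit[of 0] by (intro pairwise_orthogonal_independent) auto
  then have "dim (range u) = DIM(real^'n)"
    using inj by (simp add: dim_eq_card_independent card_image)
  then have "y \<in> span (range u)"
    using dim_eq_full[of "range u"] by simp
  then have "(\<Sum>x\<in>range u. (y \<bullet> x) *\<^sub>R x) = y"
    using orthonormal_basis_expand[OF orth unit] by simp
  then show ?thesis
    by (simp add: sum.reindex[OF inj] o_def)
qed

lemma orthonormal_frame_parseval:
  fixes u :: "'n \<Rightarrow> real^'n"
  assumes "orthonormal_frame u"
  shows "(\<Sum>i\<in>UNIV. (y \<bullet> u i)\<^sup>2) = (norm y)\<^sup>2"
  using norm_sum_orthonormal_frame[OF assms, of UNIV "\<lambda>i. y \<bullet> u i"]
    orthonormal_frame_expansion[OF assms]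
  by simp

lemma balanced_orthonormal_frame_exists:
  fixes A :: "real^'n^'n" and y :: "real^'n"
  assumes sym: "transpose A = A" and y: "norm y = 1"
  obtains u :: "'n \<Rightarrow> real^'n"
  where "orthonormal_frame u" "\<And>i. u i \<bullet> (A *v u i) = trace A * (y \<bullet> u i)\<^sup>2"
proof -
  define f where "f x = (trace A * (y \<bullet> x)) *\<^sub>R y - A *v x" for x
  have lin: "linear f"
    unfolding linear_iff f_def
    by (simp add: inner_add_right matrix_vector_right_distrib matrix_vector_mult_scaleR
        scaleR_add_left scaleR_diff_right distrib_left)
  have adj: "f x \<bullet> z = x \<bullet> f z" for x z
    by (simp add: f_def inner_diff_left inner_diff_right symmetric_matrix_self_adjoint[OF sym]
        inner_commute[of x y])
  have trace_zero: "(\<Sum>i\<in>UNIV. axis i 1 \<bullet> f (axis i 1)) = 0"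
  proof -
    have "axis i 1 \<bullet> f (axis i 1) = trace A * (y $ i)\<^sup>2 - A $ i $ i" for i
      by (simp add: f_def inner_axis inner_axis' matrix_vector_mult_basis column_def power2_eq_square)
    moreover have "(\<Sum>i\<in>UNIV. (y $ i)\<^sup>2) = 1"
      using y by (simp add: norm_eq_1 inner_vec_def power2_eq_square)
    ultimately show ?thesis
      by (simp add: sum_subtractf trace_def flip: sum_distrib_left)
  qed
  obtain u :: "'n \<Rightarrow> real^'n" where u: "orthonormal_frame u" and zero: "\<And>i. u i \<bullet> f (u i) = 0"
    using orthonormal_frame_zero_diagonal[OF lin adj trace_zero] by metis
  show ?thesis
  proof (rule that[OF u])
    show "u i \<bullet> (A *v u i) = trace A * (y \<bullet> u i)\<^sup>2" for i
      using zero[of i] by (simp add: f_def inner_diff_right inner_commute[of "u i" y] power2_eq_square)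
  qed
qed

lemma signs_square:
  assumes "e \<in> signs"
  shows "(e i)\<^sup>2 = 1"
proof -
  have "e i \<in> {-1, 1}"
    using assms by (simp add: signs_def)
  then show ?thesis
    by auto
qed

lemma pp_vertex_matrix_image: "pp_vertex (\<lambda>i. M *v w i) e = M *v pp_vertex w e"
  unfolding pp_vertex_def
  by (simp add: matrix_vector_mult_scaleR scaleR_sum_right linear_sum[OF matrix_vector_mul_linear])

lemma pp_edges_matrix_image:
  assumes "pp_edges w" "invertible M"
  shows "pp_edges (\<lambda>i. M *v w i)"
proof -
  have inj_M: "inj ((*v) M)"
    using assms(2) by (rule inj_matrix_vector_mult)
  have "independent ((*v) M ` range w)"
    using assms(1) inj_M unfolding pp_edges_def
    by (intro linear_independent_injective_image[OF matrix_vector_mul_linear])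
      (auto intro: inj_on_subset)
  moreover have "inj (\<lambda>i. M *v w i)"
    using assms(1) inj_M by (auto simp: pp_edges_def inj_def)
  ultimately show ?thesis
    by (simp add: pp_edges_def image_image)
qed

lemma pp_edges_scaled_frame:
  assumes "orthonormal_frame u" "\<And>i. c i \<noteq> 0"
  shows "pp_edges (\<lambda>i. c i *\<^sub>R u i)"
proof -
  have coord: "(c k *\<^sub>R u k) \<bullet> u i = (if k = i then c k else 0)" for k i
    using assms(1) by (simp add: orthonormal_frame_def)
  have "inj (\<lambda>i. c i *\<^sub>R u i)"
  proof (rule injI)
    fix i j
    assume eq: "c i *\<^sub>R u i = c j *\<^sub>R u j"
    have "(c i *\<^sub>R u i) \<bullet> u i = (c j *\<^sub>R u j) \<bullet> u i"
      by (simp only: eq)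
    then show "i = j"
      using coord[of i i] coord[of j i] assms(2)[of i] by (simp split: if_splits)
  qed
  moreover have "independent (range (\<lambda>i. c i *\<^sub>R u i))"
  proof (rule pairwise_orthogonal_independent)
    show "pairwise orthogonal (range (\<lambda>i. c i *\<^sub>R u i))"
      using assms(1) by (auto simp: pairwise_def orthogonal_def orthonormal_frame_def)
    show "0 \<notin> range (\<lambda>i. c i *\<^sub>R u i)"
    proof
      assume "0 \<in> range (\<lambda>i. c i *\<^sub>R u i)"
      then obtain i where "c i *\<^sub>R u i = 0"
        by auto
      then show False
        using coord[of i i] assms(2)[of i] by simp
    qed
  qed
  ultimately show ?thesis
    by (simp add: pp_edges_def)
qed

lemma pp_inscribed_sqrt_image:
  assumes "spd B" "B ** B = A" "\<And>e. e \<in> signs \<Longrightarrow> norm (pp_vertex w e) = 1"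
  shows "pp_inscribed A (\<lambda>i. B *v w i)"
  using assms
  by (simp add: pp_inscribed_def pp_vertex_matrix_image spd_sqrt_image_in_ellipsoid_iff)

lemma pp_sphere_inscribed_frame:
  fixes u :: "'n \<Rightarrow> real^'n"
  assumes u: "orthonormal_frame u" and y: "norm y = 1"
  defines "w \<equiv> \<lambda>i. (2 * (y \<bullet> u i)) *\<^sub>R u i"
  shows "\<And>e. e \<in> signs \<Longrightarrow> norm (pp_vertex w e) = 1" "pp_vertex w (\<lambda>_. 1) = y"
proof -
  have vertex: "pp_vertex w e = (\<Sum>i\<in>UNIV. (e i * (y \<bullet> u i)) *\<^sub>R u i)" for e
    by (simp add: w_def pp_vertex_def scaleR_sum_right)
  show "norm (pp_vertex w e) = 1" if "e \<in> signs" for e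
  proof (rule power2_eq_imp_eq)
    have "(norm (pp_vertex w e))\<^sup>2 = (\<Sum>i\<in>UNIV. (y \<bullet> u i)\<^sup>2)"
      using that by (simp add: vertex norm_sum_orthonormal_frame[OF u] power_mult_distrib signs_square)
    then show "(norm (pp_vertex w e))\<^sup>2 = 1\<^sup>2"
      using orthonormal_frame_parseval[OF u] y by simp
  qed simp_all
  show "pp_vertex w (\<lambda>_. 1) = y"
    using orthonormal_frame_expansion[OF u] by (simp add: vertex)
qed

lemma inscribed_parallelepiped_of_balanced_frame:
  fixes A B :: "real^'n^'n"
  assumes B: "spd B" "B ** B = A" and u: "orthonormal_frame u" and y: "norm y = 1"
    and balanced: "\<And>i. u i \<bullet> (A *v u i) = trace A * (y \<bullet> u i)\<^sup>2"
  defines "v \<equiv> \<lambda>i. B *v ((2 * (y \<bullet> u i)) *\<^sub>R u i)"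
  shows "pp_edges v" "pp_inscribed A v" "pp_vertex v (\<lambda>_. 1) = B *v y"
    "pp_length v = 2 ^ CARD('n) * sqrt (trace A)"
proof -
  note sphere = pp_sphere_inscribed_frame[OF u y]
  have norm_Bu: "norm (B *v u i) = sqrt (trace A) * \<bar>y \<bullet> u i\<bar>" for i
    using spd_sqrt_quadratic_form[OF B, of "u i"] balanced[of i]
    by (metis norm_ge_zero real_sqrt_abs real_sqrt_mult real_sqrt_unique)
  have "y \<bullet> u i \<noteq> 0" for i
  proof -
    have "u i \<noteq> 0"
      using u unfolding orthonormal_frame_def by (metis inner_zero_left zero_neq_one)
    then have "B *v u i \<noteq> 0"
      using inj_matrix_vector_mult[OF spd_invertible[OF B(1)]]
      by (metis injD matrix_vector_mult_0_right)
    then show ?thesis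
      using norm_Bu[of i] by auto
  qed
  then show "pp_edges v"
    unfolding v_def
    by (intro pp_edges_matrix_image pp_edges_scaled_frame u spd_invertible B(1)) simp
  show "pp_inscribed A v"
    unfolding v_def by (rule pp_inscribed_sqrt_image[OF B sphere(1)])
  show "pp_vertex v (\<lambda>_. 1) = B *v y"
    unfolding v_def pp_vertex_matrix_image sphere(2) ..
  have "norm (v i) = 2 * sqrt (trace A) * (y \<bullet> u i)\<^sup>2" for i
    by (simp add: v_def matrix_vector_mult_scaleR norm_Bu abs_mult power2_eq_square)
  then have "(\<Sum>i\<in>UNIV. norm (v i)) = 2 * sqrt (trace A)"
    using orthonormal_frame_parseval[OF u] y by (simp flip: sum_distrib_left)
  then show "pp_length v = 2 ^ CARD('n) * sqrt (trace A)"
    by (simp add: pp_length_def power_eq_if)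
qed

theorem corollary3p4:
  fixes A B :: "real^'n^'n" and x0 :: "real^'n"
  assumes n2: "CARD('n) \<ge> 2"
    and A: "spd A"
    and B: "spd B" "B ** B = A"
    and x0: "x0 \<bullet> (matrix_inv A *v x0) = 1"
    and cases: "CARD('n) = 2
             \<or> (\<exists>c. A = c *\<^sub>R mat 1)
             \<or> (CARD('n) \<ge> 3 \<and> matrix_inv B *v x0 \<noteq> 0 \<and>
                (\<exists>\<mu>. A *v (matrix_inv B *v x0) = \<mu> *\<^sub>R (matrix_inv B *v x0)))"
  shows "\<exists>v. pp_edges v \<and> pp_inscribed A v \<and> (\<exists>e\<in>signs. pp_vertex v e = x0)
             \<and> pp_length v = 2 ^ CARD('n) * sqrt (trace A)"
proof -
  \<comment> \<open>Neither \<open>n2\<close> nor \<open>cases\<close> is needed: the construction works for every point of \<open>E\<close>.\<close>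
  define y where "y = matrix_inv B *v x0"
  have x0_eq: "B *v y = x0"
    using invertible_matrix_inv(1)[OF spd_invertible[OF B(1)]]
    by (simp add: y_def matrix_vector_mul_assoc)
  then have "norm y = 1"
    using x0 spd_sqrt_image_in_ellipsoid_iff[OF B, of y] by (simp add: ellipsoid_def)
  moreover have "transpose A = A"
    using A by (simp add: spd_def)
  ultimately obtain u :: "'n \<Rightarrow> real^'n" where u: "orthonormal_frame u"
    and balanced: "\<And>i. u i \<bullet> (A *v u i) = trace A * (y \<bullet> u i)\<^sup>2"
    using balanced_orthonormal_frame_exists by metis
  have "(\<lambda>_. 1) \<in> signs"
    by (simp add: signs_def)
  then show ?thesis
    using inscribed_parallelepiped_of_balanced_frame[OF B u \<open>norm y = 1\<close> balanced] x0_eq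
    by blast
qed

end
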